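(* Fix $m\in P\cap\mathbb Z^n$ and $s_0<-s^{cvx}$, and let $\phi(x):=(x-m)\cdot\frac{\partial\psi}{\partial x}(x)-\psi(x)$. Then for each $s<s_0$ and each compact set $K$ contained in a negative-definite island of $g_s$: (1) $|\sigma^m_s|(x,\theta)=e^{(m-x)\cdot y_0+g_0}\,e^{|s|\phi(x)}$ for $x\in K$, $\theta\in\mathbb T^n$; (2) the restriction of $\phi$ to $K$ achieves its maximum on $\partial K$.
   Context: Let $P=\{x\in\mathbb R^n:\ell_j(x)=\langle\nu_j,x\rangle+\lambda_j\ge0\}$ be a Delzant polytope with interior $\check P$, $(X_P,\omega)$ the associated compact symplectic toric manifold with action-angle coordinates $(x,\theta)$ on $\check X_P\cong\check P\times\mathbb T^n$. $L$ is a Hermitian prequantum line bundle with unitary trivialization $\mathbbm1$ over $\check X_P$. Let $g_P=\frac12\sum\ell_j\log\ell_j$, $\psi\in C^\infty(P)$ strongly convex (positive definite Hessian on $P$), $g_s=g_P+s\psi$ with Hessian $H_s$ and $y_s=\partial g_s/\partial x$ (so $g_0=g_P$, $y_0=\partial g_P/\partial x$). $\sigma^m_s=e^{m\cdot(y_s+i\theta)}e^{-(x\cdot y_s-g_s)}\mathbbm1$ on $\check X_P$. A negative-definite island of $g_s$ is a connected component of $\{x\in\check P:H_s(x)\text{ negative definite}\}$; $s^{cvx}\ge0$ is the smallest number such that $g_s$ is convex on $\check P$ for all $s>-s^{cvx}$. *)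

theory Defs
  imports "HOL-Analysis.Analysis"
begin

definition grad :: "(real^'n \<Rightarrow> real) \<Rightarrow> real^'n \<Rightarrow> real^'n" where
  "grad f x = (\<chi> i. frechet_derivative f (at x) (axis i 1))"

definition hess :: "(real^'n \<Rightarrow> real) \<Rightarrow> real^'n \<Rightarrow> real^'n^'n" where
  "hess f x = (\<chi> i j. frechet_derivative (\<lambda>z. grad f z $ i) (at x) (axis j 1))"

fun Ck_on :: "nat \<Rightarrow> (real^'n) set \<Rightarrow> (real^'n \<Rightarrow> real) \<Rightarrow> bool" where
  "Ck_on 0 U f = continuous_on U f"
| "Ck_on (Suc k) U f = ((\<forall>x\<in>U. f differentiable (at x)) \<and>
      (\<forall>i. Ck_on k U (\<lambda>x. frechet_derivative f (at x) (axis i 1))))"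

definition smooth_on :: "(real^'n) set \<Rightarrow> (real^'n \<Rightarrow> real) \<Rightarrow> bool" where
  "smooth_on U f \<longleftrightarrow> (\<forall>k. Ck_on k U f)"

definition posdef :: "real^'n^'n \<Rightarrow> bool" where
  "posdef H \<longleftrightarrow> (\<forall>v. v \<noteq> 0 \<longrightarrow> v \<bullet> (H *v v) > 0)"

definition negdef :: "real^'n^'n \<Rightarrow> bool" where
  "negdef H \<longleftrightarrow> (\<forall>v. v \<noteq> 0 \<longrightarrow> v \<bullet> (H *v v) < 0)"

definition ell :: "('j \<Rightarrow> real^'n) \<Rightarrow> ('j \<Rightarrow> real) \<Rightarrow> 'j \<Rightarrow> real^'n \<Rightarrow> real" where
  "ell nu lam j x = nu j \<bullet> x + lam j"

definition polyP :: "('j \<Rightarrow> real^'n) \<Rightarrow> ('j \<Rightarrow> real) \<Rightarrow> (real^'n) set" where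
  "polyP nu lam = {x. \<forall>j. ell nu lam j x \<ge> 0}"

definition lattice_pt :: "real^'n \<Rightarrow> bool" where
  "lattice_pt z \<longleftrightarrow> (\<forall>i. z $ i \<in> \<int>)"

definition primitive_vec :: "real^'n \<Rightarrow> bool" where
  "primitive_vec v \<longleftrightarrow> lattice_pt v \<and> (\<forall>k::int. k > 1 \<longrightarrow> \<not> lattice_pt (v /\<^sub>R of_int k))"

text \<open>Delzant polytope in the (minimal) presentation P = {x. l_j(x) >= 0}: compact, full-dimensional,
  the nu_j are primitive integral vectors, each l_j = 0 cuts out a facet, distinct j give distinct
  facets, and at every vertex exactly n facets meet whose normals form a Z-basis of Z^n.\<close>
definition delzant :: "('j::finite \<Rightarrow> real^'n) \<Rightarrow> ('j \<Rightarrow> real) \<Rightarrow> bool" where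
  "delzant nu lam \<longleftrightarrow>
     bounded (polyP nu lam) \<and> interior (polyP nu lam) \<noteq> {} \<and>
     (\<forall>j. primitive_vec (nu j)) \<and>
     (\<forall>j. {x \<in> polyP nu lam. ell nu lam j x = 0} facet_of polyP nu lam) \<and>
     inj (\<lambda>j. {x \<in> polyP nu lam. ell nu lam j x = 0}) \<and>
     (\<forall>v. v extreme_point_of polyP nu lam \<longrightarrow>
        card {j. ell nu lam j v = 0} = CARD('n) \<and>
        (\<forall>z. lattice_pt z \<longrightarrow>
           (\<exists>!c::'j \<Rightarrow> int. (\<forall>j. ell nu lam j v \<noteq> 0 \<longrightarrow> c j = 0) \<and>
               z = (\<Sum>j\<in>{j. ell nu lam j v = 0}. of_int (c j) *\<^sub>R nu j))))"

definition gP :: "('j::finite \<Rightarrow> real^'n) \<Rightarrow> ('j \<Rightarrow> real) \<Rightarrow> real^'n \<Rightarrow> real" where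
  "gP nu lam x = (1/2) * (\<Sum>j\<in>UNIV. ell nu lam j x * ln (ell nu lam j x))"

definition gs :: "('j::finite \<Rightarrow> real^'n) \<Rightarrow> ('j \<Rightarrow> real) \<Rightarrow> (real^'n \<Rightarrow> real) \<Rightarrow> real \<Rightarrow> real^'n \<Rightarrow> real" where
  "gs nu lam psi s x = gP nu lam x + s * psi x"

text \<open>Coefficient of sigma^m_s with respect to the unitary trivialization 1 on P-interior x T^n;
  theta is a real vector of angles (the expression is 2pi-periodic in each theta_i).\<close>
definition sigma :: "('j::finite \<Rightarrow> real^'n) \<Rightarrow> ('j \<Rightarrow> real) \<Rightarrow> (real^'n \<Rightarrow> real) \<Rightarrow> real^'n \<Rightarrow> real
     \<Rightarrow> real^'n \<Rightarrow> real^'n \<Rightarrow> complex" where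
  "sigma nu lam psi m s x \<theta> =
     (let y = grad (gs nu lam psi s) x in
       exp (\<Sum>i\<in>UNIV. complex_of_real (m $ i) * (complex_of_real (y $ i) + \<i> * complex_of_real (\<theta> $ i)))
       * complex_of_real (exp (- (x \<bullet> y - gs nu lam psi s x))))"

definition is_island :: "('j::finite \<Rightarrow> real^'n) \<Rightarrow> ('j \<Rightarrow> real) \<Rightarrow> (real^'n \<Rightarrow> real) \<Rightarrow> real
     \<Rightarrow> (real^'n) set \<Rightarrow> bool" where
  "is_island nu lam psi s I \<longleftrightarrow>
     (let N = {x \<in> interior (polyP nu lam). negdef (hess (gs nu lam psi s) x)} in
       \<exists>x0\<in>N. I = connected_component_set N x0)"

definition s_cvx :: "('j::finite \<Rightarrow> real^'n) \<Rightarrow> ('j \<Rightarrow> real) \<Rightarrow> (real^'n \<Rightarrow> real) \<Rightarrow> real" where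
  "s_cvx nu lam psi = Sup {c. c \<ge> 0 \<and> (\<forall>s. s > - c \<longrightarrow> convex_on (interior (polyP nu lam)) (gs nu lam psi s))}"

definition phi :: "(real^'n \<Rightarrow> real) \<Rightarrow> real^'n \<Rightarrow> real^'n \<Rightarrow> real" where
  "phi psi m x = (x - m) \<bullet> grad psi x - psi x"

end

theory Submission imports Defs begin

text \<open>Along the ray x = m + t v one has d/dt phi = t (v . Hess psi v), so convexity of psi makes
  phi strictly increasing on every ray leaving m; hence phi has no interior maximum on K.
  On an island the Hessian of g_s = g_P + s psi is negative definite although Hess g_P is
  positive semidefinite and Hess psi positive definite, which forces s < 0. Substituting
  y_s = y_0 + s grad psi and g_s = g_0 + s psi into |sigma^m_s| = exp (m . y_s - x . y_s + g_s)
  then splits off the factor exp (|s| phi).\<close>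

section \<open>Directional derivatives via the gradient\<close>

lemma inner_grad_eq_frechet_derivative:
  assumes "f differentiable (at x)"
  shows "v \<bullet> grad f x = frechet_derivative f (at x) v"
proof -
  have lin: "linear (frechet_derivative f (at x))"
    using assms frechet_derivative_works has_derivative_linear by blast
  have "frechet_derivative f (at x) v = frechet_derivative f (at x) (\<Sum>i\<in>UNIV. (v$i) *\<^sub>R axis i 1)"
    using basis_expansion[of v] by (simp add: scalar_mult_eq_scaleR)
  also have "\<dots> = (\<Sum>i\<in>UNIV. (v$i) * frechet_derivative f (at x) (axis i 1))"
    using lin by (simp add: linear_sum linear_scale)
  also have "\<dots> = v \<bullet> grad f x"
    by (simp add: grad_def inner_vec_def)
  finally show ?thesis by simp
qed

lemma hess_mult_nth:
  assumes "(\<lambda>z. grad f z $ i) differentiable (at x)"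
  shows "(hess f x *v v) $ i = frechet_derivative (\<lambda>z. grad f z $ i) (at x) v"
  using inner_grad_eq_frechet_derivative[OF assms, of v]
  by (simp add: inner_vec_def grad_def hess_def matrix_vector_mult_def mult.commute)

lemma inner_hess_eq_sum_frechet_derivative:
  assumes "\<And>i. (\<lambda>z. grad f z $ i) differentiable (at x)"
  shows "v \<bullet> (hess f x *v v) = (\<Sum>i\<in>UNIV. v$i * frechet_derivative (\<lambda>z. grad f z $ i) (at x) v)"
  by (simp add: inner_vec_def hess_mult_nth[OF assms])

lemma has_real_derivative_along_line:
  assumes "f differentiable (at (a + t *\<^sub>R v))"
  shows "((\<lambda>t. f (a + t *\<^sub>R v)) has_real_derivative (v \<bullet> grad f (a + t *\<^sub>R v))) (at t)"
proof -
  let ?x = "a + t *\<^sub>R v"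
  have d: "(f has_derivative frechet_derivative f (at ?x)) (at ?x)"
    using assms frechet_derivative_works by blast
  have "((\<lambda>t. a + t *\<^sub>R v) has_derivative (\<lambda>h. h *\<^sub>R v)) (at t)"
    by (auto intro!: derivative_eq_intros)
  from has_derivative_compose[OF this d]
  have "((\<lambda>t. f (a + t *\<^sub>R v)) has_derivative (\<lambda>h. frechet_derivative f (at ?x) (h *\<^sub>R v))) (at t)"
    by (simp add: o_def)
  moreover have "(\<lambda>h. frechet_derivative f (at ?x) (h *\<^sub>R v)) = (\<lambda>h. (v \<bullet> grad f ?x) * h)"
    using inner_grad_eq_frechet_derivative[OF assms] d has_derivative_linear
    by (fastforce simp: linear_cmul)
  ultimately show ?thesis by (simp add: has_field_derivative_def)
qed

lemma inner_grad_has_real_derivative_along_line: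
  assumes "\<And>i. (\<lambda>z. grad f z $ i) differentiable (at (a + t *\<^sub>R v))"
  shows "((\<lambda>t. v \<bullet> grad f (a + t *\<^sub>R v)) has_real_derivative (v \<bullet> (hess f (a + t *\<^sub>R v) *v v))) (at t)"
proof -
  let ?x = "a + t *\<^sub>R v"
  have "((\<lambda>t. \<Sum>i\<in>UNIV. v$i * grad f (a + t *\<^sub>R v) $ i) has_real_derivative
      (\<Sum>i\<in>UNIV. v$i * frechet_derivative (\<lambda>z. grad f z $ i) (at ?x) v)) (at t)"
  proof (intro DERIV_sum DERIV_cmult)
    fix i
    show "((\<lambda>t. grad f (a + t *\<^sub>R v) $ i) has_real_derivative
        frechet_derivative (\<lambda>z. grad f z $ i) (at ?x) v) (at t)"
      using has_real_derivative_along_line[OF assms[of i]]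
      by (simp add: inner_grad_eq_frechet_derivative[OF assms[of i]])
  qed
  then show ?thesis
    by (simp add: inner_vec_def hess_mult_nth[OF assms])
qed

section \<open>Maximum of phi on a compact set\<close>

lemma phi_has_real_derivative_along_ray:
  assumes "psi differentiable (at (m + t *\<^sub>R v))"
    and "\<And>i. (\<lambda>z. grad psi z $ i) differentiable (at (m + t *\<^sub>R v))"
  shows "((\<lambda>t. phi psi m (m + t *\<^sub>R v)) has_real_derivative t * (v \<bullet> (hess psi (m + t *\<^sub>R v) *v v))) (at t)"
proof -
  let ?x = "m + t *\<^sub>R v"
  have phi_ray: "(\<lambda>t. phi psi m (m + t *\<^sub>R v)) = (\<lambda>t. t * (v \<bullet> grad psi (m + t *\<^sub>R v)) - psi (m + t *\<^sub>R v))"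
    by (simp add: phi_def)
  have "((\<lambda>t. t * (v \<bullet> grad psi (m + t *\<^sub>R v)) - psi (m + t *\<^sub>R v)) has_real_derivative
      1 * (v \<bullet> grad psi ?x) + (v \<bullet> (hess psi ?x *v v)) * t - v \<bullet> grad psi ?x) (at t)"
    by (intro DERIV_diff DERIV_mult DERIV_ident inner_grad_has_real_derivative_along_line
        has_real_derivative_along_line assms)
  then show ?thesis unfolding phi_ray by (simp add: algebra_simps)
qed

lemma phi_exceeds_in_ball:
  fixes psi :: "real^'n \<Rightarrow> real"
  assumes "r > 0"
    and d1: "\<And>z. z \<in> ball x r \<Longrightarrow> psi differentiable (at z)"
    and d2: "\<And>z i. z \<in> ball x r \<Longrightarrow> (\<lambda>z. grad psi z $ i) differentiable (at z)"
    and pd: "\<And>z. z \<in> ball x r \<Longrightarrow> posdef (hess psi z)"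
  shows "\<exists>y\<in>ball x r. phi psi m y > phi psi m x"
proof -
  obtain i0 :: 'n where True by blast
  \<comment> \<open>At x = m every ray leaving m works.\<close>
  define v where "v = (if x = m then axis i0 1 else x - m)"
  define t0 :: real where "t0 = (if x = m then 0 else 1)"
  have v0: "v \<noteq> 0" by (simp add: v_def axis_eq_0_iff)
  have x: "x = m + t0 *\<^sub>R v" and t0: "t0 \<ge> 0" by (simp_all add: v_def t0_def)
  define e where "e = r / (2 * norm v)"
  have e: "e > 0" "e * norm v < r" using \<open>r > 0\<close> v0 by (simp_all add: e_def)
  have in_ball: "m + t *\<^sub>R v \<in> ball x r" if "t0 \<le> t" "t \<le> t0 + e" for t
  proof -
    have "norm ((t - t0) *\<^sub>R v) \<le> e * norm v"
      using that by (simp add: mult_right_mono)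
    moreover have "m + t *\<^sub>R v = x + (t - t0) *\<^sub>R v" by (simp add: x algebra_simps)
    ultimately show ?thesis using e by (simp add: dist_norm)
  qed
  have "DERIV (\<lambda>t. phi psi m (m + t *\<^sub>R v)) t :> t * (v \<bullet> (hess psi (m + t *\<^sub>R v) *v v))"
    if "t0 \<le> t" "t \<le> t0 + e" for t
    using in_ball[OF that] by (intro phi_has_real_derivative_along_ray d1 d2)
  from MVT2[of t0 "t0 + e", OF _ this] e obtain z where z: "t0 < z" "z < t0 + e"
    "phi psi m (m + (t0 + e) *\<^sub>R v) - phi psi m (m + t0 *\<^sub>R v) = e * (z * (v \<bullet> (hess psi (m + z *\<^sub>R v) *v v)))"
    by auto
  have "v \<bullet> (hess psi (m + z *\<^sub>R v) *v v) > 0"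
    using pd[OF in_ball[of z]] z v0 by (auto simp: posdef_def)
  then have "e * (z * (v \<bullet> (hess psi (m + z *\<^sub>R v) *v v))) > 0"
    using z t0 e by simp
  then have "phi psi m (m + (t0 + e) *\<^sub>R v) > phi psi m x"
    using z(3) x by simp
  then show ?thesis using in_ball[of "t0 + e"] e by auto
qed

lemma compact_sup_attained_on_frontier:
  fixes f :: "'a::metric_space \<Rightarrow> real"
  assumes "compact K" "K \<noteq> {}" "continuous_on K f"
    and no_interior_max: "\<And>x. x \<in> interior K \<Longrightarrow> \<exists>y\<in>K. f y > f x"
  shows "\<exists>x\<in>frontier K. \<forall>z\<in>K. f z \<le> f x"
proof -
  obtain x where x: "x \<in> K" "\<And>z. z \<in> K \<Longrightarrow> f z \<le> f x"
    using continuous_attains_sup[OF assms(1-3)] by blast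
  have "x \<notin> interior K"
    using no_interior_max x by fastforce
  then have "x \<in> frontier K"
    using x compact_imp_closed[OF \<open>compact K\<close>] by (simp add: frontier_def closure_closed)
  then show ?thesis using x by blast
qed

lemma phi_max_on_frontier:
  fixes psi :: "real^'n \<Rightarrow> real"
  assumes "compact K" "K \<noteq> {}"
    and d1: "\<And>z. z \<in> K \<Longrightarrow> psi differentiable (at z)"
    and d2: "\<And>z i. z \<in> K \<Longrightarrow> (\<lambda>z. grad psi z $ i) differentiable (at z)"
    and pd: "\<And>z. z \<in> K \<Longrightarrow> posdef (hess psi z)"
  shows "\<exists>x\<in>frontier K. \<forall>z\<in>K. phi psi m z \<le> phi psi m x"
proof (rule compact_sup_attained_on_frontier[OF assms(1,2)])
  have "continuous_on K (\<lambda>z. \<chi> i. grad psi z $ i)"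
    by (intro continuous_on_vec_lambda continuous_at_imp_continuous_on ballI
        differentiable_imp_continuous_within d2)
  moreover have "continuous_on K psi"
    by (intro continuous_at_imp_continuous_on ballI differentiable_imp_continuous_within d1)
  ultimately show "continuous_on K (phi psi m)"
    unfolding phi_def by (auto intro!: continuous_intros)
next
  fix x assume "x \<in> interior K"
  then obtain r where "r > 0" "ball x r \<subseteq> K" using mem_interior by blast
  then show "\<exists>y\<in>K. phi psi m y > phi psi m x"
    using phi_exceeds_in_ball[of r x psi m] d1 d2 pd by blast
qed

section \<open>Gradient and Hessian of the potential\<close>

lemma ell_has_derivative: "(ell nu lam j has_derivative (\<lambda>w. nu j \<bullet> w)) (at x)"
  unfolding ell_def by (auto intro!: derivative_eq_intros)

lemma ell_pos_interior_polyP: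
  assumes "nu j \<noteq> 0" "x \<in> interior (polyP nu lam)"
  shows "ell nu lam j x > 0"
proof -
  obtain r where r: "r > 0" "ball x r \<subseteq> polyP nu lam" using assms(2) mem_interior by blast
  define c where "c = r / (2 * norm (nu j))"
  have "dist x (x - c *\<^sub>R nu j) < r" using r assms(1) by (simp add: c_def dist_norm)
  then have "x - c *\<^sub>R nu j \<in> polyP nu lam" using r by auto
  then have "ell nu lam j (x - c *\<^sub>R nu j) \<ge> 0" by (simp add: polyP_def)
  moreover have "ell nu lam j (x - c *\<^sub>R nu j) = ell nu lam j x - c * (nu j \<bullet> nu j)"
    by (simp add: ell_def inner_diff_right algebra_simps)
  moreover have "c * (nu j \<bullet> nu j) > 0"
    using r assms(1) by (simp add: c_def)
  ultimately show ?thesis by linarith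
qed

lemma primitive_vec_nonzero: "primitive_vec v \<Longrightarrow> v \<noteq> 0"
  unfolding primitive_vec_def by (auto elim!: allE[of _ 2])

lemma delzant_ell_pos_interior:
  assumes "delzant nu lam" "x \<in> interior (polyP nu lam)"
  shows "ell nu lam j x > 0"
proof (rule ell_pos_interior_polyP[OF _ assms(2)])
  have "primitive_vec (nu j)"
    using assms(1) by (simp add: delzant_def)
  then show "nu j \<noteq> 0" by (rule primitive_vec_nonzero)
qed

lemma gP_has_derivative:
  fixes nu :: "'j::finite \<Rightarrow> real^'n"
  assumes "\<And>j. ell nu lam j x > 0"
  shows "(gP nu lam has_derivative (\<lambda>w. (1/2) * (\<Sum>j\<in>UNIV. (nu j \<bullet> w) * (ln (ell nu lam j x) + 1)))) (at x)"
proof -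
  have "((\<lambda>x. ell nu lam j x * ln (ell nu lam j x)) has_derivative
      (\<lambda>w. (nu j \<bullet> w) * (ln (ell nu lam j x) + 1))) (at x)" for j
  proof -
    have "((\<lambda>x. ell nu lam j x * ln (ell nu lam j x)) has_derivative
        (\<lambda>w. ell nu lam j x * ((nu j \<bullet> w) / ell nu lam j x) + (nu j \<bullet> w) * ln (ell nu lam j x))) (at x)"
      using assms[of j] by (auto intro!: derivative_eq_intros ell_has_derivative)
    moreover have "(\<lambda>w. ell nu lam j x * ((nu j \<bullet> w) / ell nu lam j x) + (nu j \<bullet> w) * ln (ell nu lam j x))
        = (\<lambda>w. (nu j \<bullet> w) * (ln (ell nu lam j x) + 1))"
      using assms[of j] by (auto simp: field_simps)
    ultimately show ?thesis by simp
  qed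
  then have "((\<lambda>x. (1/2) * (\<Sum>j\<in>UNIV. ell nu lam j x * ln (ell nu lam j x))) has_derivative
      (\<lambda>w. (1/2) * (\<Sum>j\<in>UNIV. (nu j \<bullet> w) * (ln (ell nu lam j x) + 1)))) (at x)"
    by (intro has_derivative_mult_right has_derivative_sum) auto
  then show ?thesis unfolding gP_def[abs_def] .
qed

lemma gs_has_derivative:
  fixes nu :: "'j::finite \<Rightarrow> real^'n"
  assumes "\<And>j. ell nu lam j x > 0" and "psi differentiable (at x)"
  shows "(gs nu lam psi s has_derivative (\<lambda>w. (1/2) * (\<Sum>j\<in>UNIV. (nu j \<bullet> w) * (ln (ell nu lam j x) + 1))
            + s * frechet_derivative psi (at x) w)) (at x)"
  unfolding gs_def[abs_def] using assms frechet_derivative_works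
  by (intro has_derivative_add gP_has_derivative has_derivative_mult_right) auto

lemma grad_gs_nth:
  fixes nu :: "'j::finite \<Rightarrow> real^'n"
  assumes "\<And>j. ell nu lam j x > 0" and "psi differentiable (at x)"
  shows "grad (gs nu lam psi s) x $ i = (1/2) * (\<Sum>j\<in>UNIV. (nu j $ i) * (ln (ell nu lam j x) + 1)) + s * grad psi x $ i"
  unfolding grad_def using frechet_derivative_at[OF gs_has_derivative[OF assms, of s], symmetric]
  by (simp add: inner_axis)

lemma grad_gs:
  fixes nu :: "'j::finite \<Rightarrow> real^'n"
  assumes "\<And>j. ell nu lam j x > 0" and "psi differentiable (at x)"
  shows "grad (gs nu lam psi s) x = grad (gs nu lam psi 0) x + s *\<^sub>R grad psi x"
  by (simp add: vec_eq_iff grad_gs_nth[OF assms])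

lemma inner_hess_gs:
  fixes nu :: "'j::finite \<Rightarrow> real^'n"
  assumes x: "x \<in> interior (polyP nu lam)"
    and pos: "\<And>z j. z \<in> interior (polyP nu lam) \<Longrightarrow> ell nu lam j z > 0"
    and d1: "\<And>z. z \<in> interior (polyP nu lam) \<Longrightarrow> psi differentiable (at z)"
    and d2: "\<And>i. (\<lambda>z. grad psi z $ i) differentiable (at x)"
  shows "v \<bullet> (hess (gs nu lam psi s) x *v v) =
     (1/2) * (\<Sum>j\<in>UNIV. (nu j \<bullet> v)\<^sup>2 / ell nu lam j x) + s * (v \<bullet> (hess psi x *v v))"
proof -
  define D where "D i = (\<lambda>w. (1/2) * (\<Sum>j\<in>UNIV. nu j $ i * ((nu j \<bullet> w) / ell nu lam j x))
      + s * frechet_derivative (\<lambda>z. grad psi z $ i) (at x) w)" for i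
  have ln_ell: "((\<lambda>z. ln (ell nu lam j z)) has_derivative (\<lambda>w. (nu j \<bullet> w) / ell nu lam j x)) (at x)" for j
    using pos[OF x, of j] by (auto intro!: derivative_eq_intros ell_has_derivative simp: divide_inverse)
  have hd: "((\<lambda>z. grad (gs nu lam psi s) z $ i) has_derivative D i) (at x)" for i
  proof -
    have "((\<lambda>z. (1/2) * (\<Sum>j\<in>UNIV. (nu j $ i) * (ln (ell nu lam j z) + 1)) + s * grad psi z $ i)
        has_derivative D i) (at x)"
      unfolding D_def using d2[of i] frechet_derivative_works ln_ell
      by (intro has_derivative_add has_derivative_mult_right has_derivative_sum
          has_derivative_add_const) auto
    then show ?thesis
      by (rule has_derivative_transform_within_open[OF _ open_interior x])
         (simp add: grad_gs_nth pos d1)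
  qed
  have "frechet_derivative (\<lambda>z. grad (gs nu lam psi s) z $ i) (at x) = D i" for i
    using frechet_derivative_at[OF hd] by simp
  then have "v \<bullet> (hess (gs nu lam psi s) x *v v) = (\<Sum>i\<in>UNIV. v$i * D i v)"
    by (simp add: inner_hess_eq_sum_frechet_derivative[OF differentiableI[OF hd]])
  also have "\<dots> = (1/2) * (\<Sum>i\<in>UNIV. \<Sum>j\<in>UNIV. v$i * nu j $ i * ((nu j \<bullet> v) / ell nu lam j x))
      + s * (\<Sum>i\<in>UNIV. v$i * frechet_derivative (\<lambda>z. grad psi z $ i) (at x) v)"
    by (simp add: D_def algebra_simps sum.distrib sum_distrib_left)
  also have "(\<Sum>i\<in>UNIV. \<Sum>j\<in>UNIV. v$i * nu j $ i * ((nu j \<bullet> v) / ell nu lam j x))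
      = (\<Sum>j\<in>UNIV. (\<Sum>i\<in>UNIV. v$i * nu j $ i) * ((nu j \<bullet> v) / ell nu lam j x))"
    by (subst sum.swap) (simp only: sum_distrib_right)
  also have "\<dots> = (\<Sum>j\<in>UNIV. (nu j \<bullet> v)\<^sup>2 / ell nu lam j x)"
    by (simp add: inner_vec_def mult.commute power2_eq_square)
  also have "(\<Sum>i\<in>UNIV. v$i * frechet_derivative (\<lambda>z. grad psi z $ i) (at x) v) = v \<bullet> (hess psi x *v v)"
    by (simp add: inner_hess_eq_sum_frechet_derivative[OF d2])
  finally show ?thesis .
qed

section \<open>The norm of sigma and the sign of s on an island\<close>

lemma norm_sigma:
  "cmod (sigma nu lam psi m s x \<theta>) =
     exp (m \<bullet> grad (gs nu lam psi s) x - (x \<bullet> grad (gs nu lam psi s) x - gs nu lam psi s x))"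
proof -
  have "Re (\<Sum>i\<in>UNIV. complex_of_real (m $ i) *
      (complex_of_real (grad (gs nu lam psi s) x $ i) + \<i> * complex_of_real (\<theta> $ i)))
     = m \<bullet> grad (gs nu lam psi s) x"
    by (simp add: inner_vec_def)
  then show ?thesis
    by (simp add: sigma_def Let_def norm_mult norm_exp_eq_Re exp_add[symmetric] del: exp_add)
qed

lemma norm_sigma_eq_phi:
  fixes nu :: "'j::finite \<Rightarrow> real^'n"
  assumes "\<And>j. ell nu lam j x > 0" "psi differentiable (at x)" "s \<le> 0"
  shows "cmod (sigma nu lam psi m s x \<theta>) =
     exp ((m - x) \<bullet> grad (gs nu lam psi 0) x + gs nu lam psi 0 x) * exp (\<bar>s\<bar> * phi psi m x)"
proof -
  have "m \<bullet> (y + s *\<^sub>R z) - (x \<bullet> (y + s *\<^sub>R z) - (g + s * p))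
      = (m - x) \<bullet> y + g + \<bar>s\<bar> * ((x - m) \<bullet> z - p)" for y z :: "real^'n" and g p
    using assms(3) by (simp add: abs_of_nonpos inner_add_right inner_diff_left algebra_simps)
  moreover have "gs nu lam psi s x = gs nu lam psi 0 x + s * psi x"
    by (simp add: gs_def)
  ultimately show ?thesis
    unfolding norm_sigma grad_gs[OF assms(1,2), of s] phi_def exp_add[symmetric] by simp
qed

lemma is_islandE:
  assumes "is_island nu lam psi s I"
  obtains x0 where "x0 \<in> {x \<in> interior (polyP nu lam). negdef (hess (gs nu lam psi s) x)}"
    "I = connected_component_set {x \<in> interior (polyP nu lam). negdef (hess (gs nu lam psi s) x)} x0"
  using assms unfolding is_island_def Let_def by (elim bexE) 

lemma island_subset_interior:
  assumes "is_island nu lam psi s I"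
  shows "I \<subseteq> {x \<in> interior (polyP nu lam). negdef (hess (gs nu lam psi s) x)}"
proof (rule is_islandE[OF assms])
  fix x0
  assume "I = connected_component_set {x \<in> interior (polyP nu lam). negdef (hess (gs nu lam psi s) x)} x0"
  then show ?thesis by (simp only: connected_component_subset)
qed

lemma island_nonempty:
  assumes "is_island nu lam psi s I"
  shows "I \<noteq> {}"
proof (rule is_islandE[OF assms])
  fix x0
  assume "x0 \<in> {x \<in> interior (polyP nu lam). negdef (hess (gs nu lam psi s) x)}"
    "I = connected_component_set {x \<in> interior (polyP nu lam). negdef (hess (gs nu lam psi s) x)} x0"
  then show ?thesis by (simp only: connected_component_eq_empty) simp
qed
lemma negdef_hess_gs_imp_neg:
  fixes nu :: "'j::finite \<Rightarrow> real^'n"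
  assumes x: "x \<in> interior (polyP nu lam)"
    and pos: "\<And>z j. z \<in> interior (polyP nu lam) \<Longrightarrow> ell nu lam j z > 0"
    and d1: "\<And>z. z \<in> interior (polyP nu lam) \<Longrightarrow> psi differentiable (at z)"
    and d2: "\<And>i. (\<lambda>z. grad psi z $ i) differentiable (at x)"
    and "posdef (hess psi x)" "negdef (hess (gs nu lam psi s) x)"
  shows "s < 0"
proof (rule ccontr)
  assume "\<not> s < 0"
  obtain i0 :: 'n where True by blast
  have v0: "axis i0 (1::real) \<noteq> 0" by (simp add: axis_eq_0_iff)
  let ?v = "axis i0 (1::real)"
  have "(\<Sum>j\<in>UNIV. (nu j \<bullet> ?v)\<^sup>2 / ell nu lam j x) \<ge> 0"
    using pos[OF x] by (intro sum_nonneg) (simp add: less_imp_le)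
  moreover have "s * (?v \<bullet> (hess psi x *v ?v)) \<ge> 0"
    using \<open>posdef (hess psi x)\<close> \<open>\<not> s < 0\<close> v0 by (simp add: posdef_def less_imp_le)
  moreover have "?v \<bullet> (hess (gs nu lam psi s) x *v ?v) < 0"
    using \<open>negdef (hess (gs nu lam psi s) x)\<close> v0 by (simp add: negdef_def)
  ultimately show False
    using inner_hess_gs[OF x pos d1 d2, of ?v s] by linarith
qed

lemma smooth_on_differentiable:
  assumes "smooth_on U f" "x \<in> U"
  shows "f differentiable (at x)" and "(\<lambda>z. grad f z $ i) differentiable (at x)"
proof -
  have "Ck_on (Suc (Suc 0)) U f" using assms(1) smooth_on_def by blast
  then show "f differentiable (at x)" "(\<lambda>z. grad f z $ i) differentiable (at x)"
    using assms(2) by (simp_all add: grad_def)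
qed

theorem mainTheorem13:
  fixes nu :: "'j::finite \<Rightarrow> real^'n" and lam :: "'j \<Rightarrow> real"
    and psi :: "real^'n \<Rightarrow> real" and m :: "real^'n" and s0 :: real
  assumes "delzant nu lam"
    and "\<exists>U. open U \<and> polyP nu lam \<subseteq> U \<and> smooth_on U psi"
    and "\<forall>x\<in>polyP nu lam. posdef (hess psi x)"
    and "m \<in> polyP nu lam" and "lattice_pt m"
    and "s0 < - s_cvx nu lam psi"
  shows "\<forall>s<s0. \<forall>K I. compact K \<and> is_island nu lam psi s I \<and> K \<subseteq> I \<longrightarrow>
           (\<forall>x\<in>K. \<forall>\<theta>. cmod (sigma nu lam psi m s x \<theta>)
               = exp ((m - x) \<bullet> grad (gs nu lam psi 0) x + gs nu lam psi 0 x) * exp (\<bar>s\<bar> * phi psi m x))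
         \<and> (K \<noteq> {} \<longrightarrow> (\<exists>x\<in>frontier K. \<forall>z\<in>K. phi psi m z \<le> phi psi m x))"
proof (intro allI impI conjI ballI)
  fix s K I
  assume "s < s0" and "compact K \<and> is_island nu lam psi s I \<and> K \<subseteq> I"
  then have "compact K" and island: "is_island nu lam psi s I" and "K \<subseteq> I" by simp_all
  obtain U where "polyP nu lam \<subseteq> U" "smooth_on U psi" using assms(2) by blast
  then have d1: "\<And>z. z \<in> polyP nu lam \<Longrightarrow> psi differentiable (at z)"
    and d2: "\<And>z i. z \<in> polyP nu lam \<Longrightarrow> (\<lambda>z. grad psi z $ i) differentiable (at z)"
    using smooth_on_differentiable by blast+
  have int: "\<And>z. z \<in> interior (polyP nu lam) \<Longrightarrow> z \<in> polyP nu lam"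
    using interior_subset by blast
  have pos: "\<And>z j. z \<in> interior (polyP nu lam) \<Longrightarrow> ell nu lam j z > 0"
    by (rule delzant_ell_pos_interior[OF assms(1)])
  obtain x0 where "x0 \<in> I" using island_nonempty[OF island] by blast
  then have "x0 \<in> interior (polyP nu lam)" "negdef (hess (gs nu lam psi s) x0)"
    using island_subset_interior[OF island] by auto
  then have "s < 0"
    using assms(3) int d1 d2 pos by (intro negdef_hess_gs_imp_neg[of x0 nu lam psi]) auto
  have K: "K \<subseteq> interior (polyP nu lam)"
    using \<open>K \<subseteq> I\<close> island_subset_interior[OF island] by blast
  show "cmod (sigma nu lam psi m s x \<theta>)
      = exp ((m - x) \<bullet> grad (gs nu lam psi 0) x + gs nu lam psi 0 x) * exp (\<bar>s\<bar> * phi psi m x)"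
    if "x \<in> K" for x \<theta>
    using that K pos d1 int \<open>s < 0\<close> by (intro norm_sigma_eq_phi) auto
  show "\<exists>x\<in>frontier K. \<forall>z\<in>K. phi psi m z \<le> phi psi m x" if "K \<noteq> {}"
    using that \<open>compact K\<close> K int d1 d2 assms(3) by (intro phi_max_on_frontier) auto
qed

end
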